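(* Let \(m\) be a positive integer that is not a perfect square, let \(a,b,c\) be positive integers with \(\gcd(a,b^2-c^2m)=1\), and let \(A,B\in\mathbb Z\). If \(A\geq (a-1)(b-1+cm)\) and \(B\geq (a-1)(b-1+c)\), then there exist \(x,y,z,w\in\mathbb N\) with \(a(x+y\sqrt m)+(b+c\sqrt m)(z+w\sqrt m)=A+B\sqrt m\).
   Context: \(\mathbb N\) denotes the set of non-negative integers. *)

theory Defs
  imports Complex_Main
begin

end

theory Submission
  imports Defs
begin

text \<open>
  Comparing rational and irrational parts, it suffices to solve
  \<open>a x + b z + c m w = A\<close> and \<open>a y + c z + b w = B\<close>. Modulo \<open>a\<close> this is a linear system
  in \<open>(z, w)\<close> with determinant \<open>b\<^sup>2 - c\<^sup>2 m\<close>, a unit mod \<open>a\<close>, so it has a solution with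
  \<open>0 \<le> z, w < a\<close>. The quotients \<open>x, y\<close> are then nonnegative precisely because of the lower
  bounds on \<open>A\<close> and \<open>B\<close>, which dominate the largest possible contribution of \<open>z\<close> and \<open>w\<close>.
\<close>

lemma norm_system_solvable_mod:
  fixes a b c m A B :: int
  assumes "coprime a (b\<^sup>2 - c\<^sup>2 * m)"
  obtains z w where "a dvd A - b * z - c * m * w" "a dvd B - c * z - b * w"
proof -
  define D where "D = b\<^sup>2 - c\<^sup>2 * m"
  obtain u v where uv: "u * a + v * D = 1"
    using bezout_int[of a D] assms unfolding D_def by auto
  \<comment> \<open>multiply by the adjugate matrix and by an inverse \<open>v\<close> of the determinant mod \<open>a\<close>\<close>
  define z where "z = v * (b * A - c * m * B)"
  define w where "w = v * (b * B - c * A)"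
  have vD: "v * D = 1 - u * a"
    using uv by simp
  have "A - b * z - c * m * w = A - v * D * A"
    unfolding z_def w_def D_def by (simp add: algebra_simps power2_eq_square)
  also have "\<dots> = a * (u * A)"
    unfolding vD by (simp add: algebra_simps)
  finally have dvd_A: "a dvd A - b * z - c * m * w" by simp
  have "B - c * z - b * w = B - v * D * B"
    unfolding z_def w_def D_def by (simp add: algebra_simps power2_eq_square)
  also have "\<dots> = a * (u * B)"
    unfolding vD by (simp add: algebra_simps)
  finally have "a dvd B - c * z - b * w" by simp
  with dvd_A show thesis
    by (rule that)
qed

lemma dvd_diff_mod_reduce:
  fixes a p q z w X :: int
  assumes "a dvd X - p * z - q * w"
  shows "a dvd X - p * (z mod a) - q * (w mod a)"
proof -
  have "X - p * (z mod a) - q * (w mod a) = (X - p * z - q * w) + a * (p * (z div a) + q * (w div a))"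
    by (simp add: algebra_simps minus_div_mult_eq_mod[symmetric])
  then show ?thesis
    using assms by (metis dvd_add dvd_triv_left)
qed

lemma quotient_nonneg_of_bounded_residues:
  fixes a p q z w A x :: int
  assumes "a > 0" "p \<ge> 0" "q \<ge> 0" "0 \<le> z" "z < a" "0 \<le> w" "w < a"
    and "A \<ge> (a - 1) * (p + q - 1)"
    and "a * x = A - p * z - q * w"
  shows "x \<ge> 0"
proof -
  have "p * z \<le> p * (a - 1)" "q * w \<le> q * (a - 1)"
    using assms(2-7) by (simp_all add: mult_left_mono)
  then have "a * x > a * (-1)"
    using assms(8,9) by (simp add: algebra_simps)
  then have "x > -1"
    using assms(1) mult_less_cancel_left_pos by metis
  then show ?thesis
    by simp
qed

theorem theorem1:
  fixes m a b c :: nat and A B :: int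
  assumes "m > 0"
    and "\<not> (\<exists>k::nat. k ^ 2 = m)"
    and "a > 0" and "b > 0" and "c > 0"
    and "gcd (int a) (int b ^ 2 - int c ^ 2 * int m) = 1"
    and "A \<ge> (int a - 1) * (int b - 1 + int c * int m)"
    and "B \<ge> (int a - 1) * (int b - 1 + int c)"
  shows "\<exists>x y z w :: nat.
           real a * (real x + real y * sqrt (real m))
           + (real b + real c * sqrt (real m)) * (real z + real w * sqrt (real m))
           = real_of_int A + real_of_int B * sqrt (real m)"
proof -
  obtain z0 w0 where "int a dvd A - int b * z0 - int c * int m * w0" "int a dvd B - int c * z0 - int b * w0"
    using norm_system_solvable_mod[of "int a" "int b" "int c" "int m" A B] assms(6)
    by (auto simp: coprime_iff_gcd_eq_1)
  then obtain z w where z: "0 \<le> z" "z < int a" and w: "0 \<le> w" "w < int a"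
    and "int a dvd A - int b * z - int c * int m * w" "int a dvd B - int c * z - int b * w"
    using assms(3) by (meson dvd_diff_mod_reduce of_nat_0_less_iff pos_mod_sign pos_mod_bound)
  then obtain x y where x: "int a * x = A - int b * z - int c * int m * w"
    and y: "int a * y = B - int c * z - int b * w"
    by (metis dvdE)
  have "x \<ge> 0"
    using quotient_nonneg_of_bounded_residues[OF _ _ _ z w _ x] assms(3,7) by (simp add: algebra_simps)
  moreover have "y \<ge> 0"
    using quotient_nonneg_of_bounded_residues[OF _ _ _ z w _ y] assms(3,8) by (simp add: algebra_simps)
  moreover have "real a * (x + y * sqrt m) + (b + c * sqrt m) * (z + w * sqrt m) = A + B * sqrt m"
  proof -
    have "real a * x + b * z + c * m * w = A" "real a * y + c * z + b * w = B"
      using arg_cong[OF x, of real_of_int] arg_cong[OF y, of real_of_int] by (simp_all add: algebra_simps)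
    moreover have "real a * (x + y * sqrt m) + (b + c * sqrt m) * (z + w * sqrt m)
        = (real a * x + b * z + c * (sqrt m * sqrt m) * w) + (real a * y + c * z + b * w) * sqrt m"
      by (simp add: algebra_simps)
    ultimately show ?thesis
      by simp
  qed
  ultimately show ?thesis
    using z w by (intro exI[of _ "nat x"] exI[of _ "nat y"] exI[of _ "nat z"] exI[of _ "nat w"]) simp
qed

end
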